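(* For every $\mu>1/8$ there exists $n_0$ such that for every $n\ge n_0$ there is a Dirac graph $G$ on $n$ vertices and a $\mu n$-bounded colouring of $E(G)$ such that $G$ contains no rainbow Hamilton cycle.
   Context: A Dirac graph is a graph $G$ on $n$ vertices with $\delta(G)\ge n/2$. An edge-colouring is $k$-bounded if no colour appears on more than $k$ edges. A subgraph is rainbow if no two of its edges have the same colour. *)

theory Defs
  imports Complex_Main
begin

definition simple_graph :: "nat \<Rightarrow> nat set set \<Rightarrow> bool" where
  "simple_graph n E \<longleftrightarrow> (\<forall>e\<in>E. e \<subseteq> {0..<n} \<and> card e = 2)"

definition degree :: "nat \<Rightarrow> nat set set \<Rightarrow> nat \<Rightarrow> nat" where
  "degree n E v = card {u \<in> {0..<n}. {v, u} \<in> E}"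

definition dirac_graph :: "nat \<Rightarrow> nat set set \<Rightarrow> bool" where
  "dirac_graph n E \<longleftrightarrow> simple_graph n E \<and>
     (\<forall>v\<in>{0..<n}. real (degree n E v) \<ge> real n / 2)"

definition bounded_colouring :: "real \<Rightarrow> nat set set \<Rightarrow> (nat set \<Rightarrow> 'c) \<Rightarrow> bool" where
  "bounded_colouring k E c \<longleftrightarrow> (\<forall>x. real (card {e \<in> E. c e = x}) \<le> k)"

definition ham_cycle :: "nat \<Rightarrow> nat set set \<Rightarrow> nat list \<Rightarrow> bool" where
  "ham_cycle n E vs \<longleftrightarrow> n \<ge> 3 \<and> length vs = n \<and> distinct vs \<and> set vs = {0..<n} \<and>
     (\<forall>i<n. {vs ! i, vs ! ((i + 1) mod n)} \<in> E)"

definition cycle_edges :: "nat list \<Rightarrow> nat set set" where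
  "cycle_edges vs = {{vs ! i, vs ! ((i + 1) mod length vs)} | i. i < length vs}"

definition rainbow :: "(nat set \<Rightarrow> 'c) \<Rightarrow> nat set set \<Rightarrow> bool" where
  "rainbow c F \<longleftrightarrow> inj_on c F"

definition has_rainbow_ham_cycle :: "nat \<Rightarrow> nat set set \<Rightarrow> (nat set \<Rightarrow> 'c) \<Rightarrow> bool" where
  "has_rainbow_ham_cycle n E c \<longleftrightarrow> (\<exists>vs. ham_cycle n E vs \<and> rainbow c (cycle_edges vs))"

end

theory Submission
  imports Defs "HOL-Number_Theory.Cong"
begin

text \<open>Put the vertices \<open>{..<m}\<close> on a circle, join each of them to its \<open>d\<close> nearest neighbours
on either side, and join every vertex of \<open>{..<m}\<close> to every vertex of the independent set
\<open>{m..<n}\<close>. For \<open>m = n div 2 + 2 d\<close> all degrees are at least \<open>n / 2\<close>. Along a Hamilton cycle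
at most \<open>n - m\<close> vertices of the circle are followed by a vertex outside it, so the cycle uses
at least \<open>2 m - n \<ge> 4 d - 1\<close> edges of the circle. Cut the circle into \<open>4 d - 2\<close> arcs and give
a circle edge the colour of the arc containing its starting point, and give every cross edge
its own colour. Then no Hamilton cycle is rainbow, and each colour occurs at most
\<open>d m / (4 d - 2) + d \<approx> d n / (8 d - 4)\<close> times, which is below \<open>\<mu> n\<close> once \<open>d / (8 d - 4) < \<mu>\<close>
and \<open>n\<close> is large.\<close>

definition circulant_edges :: "nat \<Rightarrow> nat \<Rightarrow> nat set set" where
  "circulant_edges m d = {{u, (u + j) mod m} | u j. u < m \<and> 1 \<le> j \<and> j \<le> d}"

definition cross_edges :: "nat \<Rightarrow> nat \<Rightarrow> nat set set" where
  "cross_edges n m = {{x, y} | x y. x < m \<and> m \<le> y \<and> y < n}"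

definition circulant_start :: "nat \<Rightarrow> nat \<Rightarrow> nat set \<Rightarrow> nat" where
  "circulant_start m d e = (LEAST u. \<exists>j. u < m \<and> 1 \<le> j \<and> j \<le> d \<and> e = {u, (u + j) mod m})"

text \<open>Arcs have length \<open>L\<close>. A cross edge \<open>{x, y}\<close> with \<open>x < m \<le> y < n\<close> gets the code
\<open>x * n + y \<ge> m\<close>, which is larger than every arc index.\<close>

definition arc_colouring :: "nat \<Rightarrow> nat \<Rightarrow> nat \<Rightarrow> nat \<Rightarrow> nat set \<Rightarrow> nat" where
  "arc_colouring n m d L e =
     (if e \<subseteq> {..<m} then circulant_start m d e div L else Min e * n + Max e)"

lemma add_mod_neq_self:
  fixes u j m :: nat
  assumes "u < m" "0 < j" "j < m"
  shows "(u + j) mod m \<noteq> u"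
proof
  assume "(u + j) mod m = u"
  then have "[u + j = u + 0] (mod m)"
    using assms(1) by (simp add: cong_def)
  then have "[j = 0] (mod m)"
    by (simp only: cong_add_lcancel_nat)
  then have "j = 0"
    using assms(1,3) by (intro cong_less_modulus_unique_nat) auto
  then show False
    using assms(2) by simp
qed

lemma inj_on_add_mod: "inj_on (\<lambda>j. (v + j) mod m) {..<(m::nat)}"
proof (rule inj_onI)
  fix x y
  assume "x \<in> {..<m}" "y \<in> {..<m}" "(v + x) mod m = (v + y) mod m"
  from this(3) have "[x = y] (mod m)"
    by (simp only: cong_def[symmetric] cong_add_lcancel_nat)
  then show "x = y"
    using \<open>x \<in> {..<m}\<close> \<open>y \<in> {..<m}\<close> by (intro cong_less_modulus_unique_nat) auto
qed

section \<open>The graph\<close>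

lemma circulant_edgeI:
  "u < m \<Longrightarrow> 1 \<le> j \<Longrightarrow> j \<le> d \<Longrightarrow> {u, (u + j) mod m} \<in> circulant_edges m d"
  unfolding circulant_edges_def by blast

lemma circulant_edge_backwardI:
  assumes "u < m" "1 \<le> j" "j \<le> d" "j < m"
  shows "{u, (u + (m - j)) mod m} \<in> circulant_edges m d"
proof -
  let ?w = "(u + (m - j)) mod m"
  have "(?w + j) mod m = (u + (m - j) + j) mod m"
    by (simp add: mod_add_left_eq)
  also have "\<dots> = (u + m) mod m"
    using assms(4) by simp
  also have "\<dots> = u"
    using assms(1) by simp
  finally have "(?w + j) mod m = u" .
  moreover have "?w < m"
    using assms(1) by simp
  ultimately show ?thesis
    using circulant_edgeI[of ?w m j d] assms(2,3) by (simp add: insert_commute)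
qed

lemma circulant_edge_startE:
  assumes "e \<in> circulant_edges m d"
  obtains j where "circulant_start m d e < m" "1 \<le> j" "j \<le> d"
    "e = {circulant_start m d e, (circulant_start m d e + j) mod m}"
proof -
  from assms have "\<exists>u j. u < m \<and> 1 \<le> j \<and> j \<le> d \<and> e = {u, (u + j) mod m}"
    unfolding circulant_edges_def by blast
  then have "\<exists>j. circulant_start m d e < m \<and> 1 \<le> j \<and> j \<le> d \<and>
      e = {circulant_start m d e, (circulant_start m d e + j) mod m}"
    unfolding circulant_start_def by (rule LeastI_ex)
  then show ?thesis
    using that by blast
qed

lemma circulant_edge_subset: "e \<in> circulant_edges m d \<Longrightarrow> e \<subseteq> {..<m}"
  unfolding circulant_edges_def by auto

lemma cross_edge_not_subset: "e \<in> cross_edges n m \<Longrightarrow> \<not> e \<subseteq> {..<m}"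
  unfolding cross_edges_def by auto

lemma simple_graph_circulant_cross:
  assumes "d < m" "m \<le> n"
  shows "simple_graph n (circulant_edges m d \<union> cross_edges n m)"
  unfolding simple_graph_def
proof
  fix e
  assume "e \<in> circulant_edges m d \<union> cross_edges n m"
  then show "e \<subseteq> {0..<n} \<and> card e = 2"
  proof
    assume "e \<in> circulant_edges m d"
    then obtain u j where u: "u < m" "1 \<le> j" "j \<le> d" "e = {u, (u + j) mod m}"
      unfolding circulant_edges_def by blast
    have "(u + j) mod m \<noteq> u"
      using add_mod_neq_self[of u m j] u assms(1) by simp
    moreover have "(u + j) mod m < n"
      using mod_less_divisor[of m "u + j"] u(1) assms(2) by linarith
    ultimately show ?thesis
      using u assms(2) by auto
  next
    assume "e \<in> cross_edges n m"
    then show ?thesis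
      unfolding cross_edges_def by auto
  qed
qed

lemma circulant_edge_offsetI:
  assumes "2 * d < m" "v < m" "j \<in> {1..d} \<union> {m - d..<m}"
  shows "{v, (v + j) mod m} \<in> circulant_edges m d"
proof (cases "j \<le> d")
  case True
  then show ?thesis
    using assms circulant_edgeI[of v m j d] by auto
next
  case False
  then have "m - d \<le> j" "j < m"
    using assms(3) by auto
  then show ?thesis
    using circulant_edge_backwardI[of v m "m - j" d] assms(1,2) by simp
qed

lemma degree_circle_vertex:
  assumes "2 * d < m" "m \<le> n" "v < m"
  shows "n - m + 2 * d \<le> degree n (circulant_edges m d \<union> cross_edges n m) v"
proof -
  let ?N = "{u \<in> {0..<n}. {v, u} \<in> circulant_edges m d \<union> cross_edges n m}"
  define J where "J = {1..d} \<union> {m - d..<m}"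
  define S where "S = (\<lambda>j. (v + j) mod m) ` J"
  have "J \<subseteq> {..<m}"
    using assms(1) unfolding J_def by auto
  then have "card S = card J"
    unfolding S_def by (intro card_image inj_on_subset[OF inj_on_add_mod])
  also have "card J = 2 * d"
    using assms(1) unfolding J_def by (subst card_Un_disjoint) auto
  finally have card_S: "card S = 2 * d" .
  have S_sub: "S \<subseteq> {..<m}"
    using assms(3) unfolding S_def by auto
  then have "S \<subseteq> {0..<n}"
    using assms(2) by auto
  then have "S \<subseteq> ?N"
    using circulant_edge_offsetI[OF assms(1,3)] unfolding S_def J_def by blast
  moreover have "{m..<n} \<subseteq> ?N"
    using assms(3) unfolding cross_edges_def by auto
  ultimately have "card ({m..<n} \<union> S) \<le> card ?N"
    by (intro card_mono) auto
  moreover have "card ({m..<n} \<union> S) = n - m + 2 * d"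
    using S_sub card_S by (subst card_Un_disjoint) (auto simp: S_def J_def)
  ultimately show ?thesis
    unfolding degree_def by simp
qed

lemma degree_outer_vertex:
  assumes "m \<le> v" "v < n"
  shows "m \<le> degree n (circulant_edges m d \<union> cross_edges n m) v"
proof -
  have "{..<m} \<subseteq> {u \<in> {0..<n}. {v, u} \<in> circulant_edges m d \<union> cross_edges n m}"
    using assms unfolding cross_edges_def by (auto simp: insert_commute)
  then have "card {..<m} \<le> card {u \<in> {0..<n}. {v, u} \<in> circulant_edges m d \<union> cross_edges n m}"
    by (intro card_mono) simp_all
  then show ?thesis
    unfolding degree_def by simp
qed

lemma dirac_graph_circulant_cross:
  assumes "2 * d < m" "m \<le> n" "n \<le> 2 * (n - m + 2 * d)" "n \<le> 2 * m"
  shows "dirac_graph n (circulant_edges m d \<union> cross_edges n m)"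
  unfolding dirac_graph_def
proof (intro conjI ballI)
  show "simple_graph n (circulant_edges m d \<union> cross_edges n m)"
    using assms(1,2) by (intro simple_graph_circulant_cross) auto
next
  fix v
  assume "v \<in> {0..<n}"
  then have "n \<le> 2 * degree n (circulant_edges m d \<union> cross_edges n m) v"
    using degree_circle_vertex[OF assms(1,2), of v] degree_outer_vertex[of m v n d] assms(3,4)
    by (cases "v < m") auto
  then show "real n / 2 \<le> real (degree n (circulant_edges m d \<union> cross_edges n m) v)"
    by linarith
qed

section \<open>The colouring\<close>

lemma arc_colouring_circulant_lt:
  assumes "e \<in> circulant_edges m d" "m \<le> L * C"
  shows "arc_colouring n m d L e < C"
proof -
  have "circulant_start m d e < m"
    by (rule circulant_edge_startE[OF assms(1)])
  then have "circulant_start m d e div L < C"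
    using assms(2) by (simp add: less_mult_imp_div_less mult.commute)
  then show ?thesis
    unfolding arc_colouring_def using circulant_edge_subset[OF assms(1)] by simp
qed

lemma arc_colouring_cross:
  assumes "x < m" "m \<le> y" "y < n"
  shows "arc_colouring n m d L {x, y} = x * n + y"
  using assms unfolding arc_colouring_def by auto

lemma arc_colouring_cross_ge:
  assumes "e \<in> cross_edges n m"
  shows "m \<le> arc_colouring n m d L e"
  using assms arc_colouring_cross[of _ m _ n d L] unfolding cross_edges_def by auto

lemma inj_on_arc_colouring_cross: "inj_on (arc_colouring n m d L) (cross_edges n m)"
proof (rule inj_onI)
  fix a b
  assume "a \<in> cross_edges n m" "b \<in> cross_edges n m"
    and same: "arc_colouring n m d L a = arc_colouring n m d L b"
  then obtain a1 a2 b1 b2 where ab: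
    "a = {a1, a2}" "a1 < m" "m \<le> a2" "a2 < n" "b = {b1, b2}" "b1 < m" "m \<le> b2" "b2 < n"
    unfolding cross_edges_def by blast
  then have codes: "a1 * n + a2 = b1 * n + b2"
    using same arc_colouring_cross by simp
  have "a2 = (a1 * n + a2) mod n"
    using ab(4) by simp
  also have "\<dots> = b2"
    using codes ab(8) by simp
  finally have "a2 = b2" .
  moreover from this have "a1 = b1"
    using codes ab(4) by simp
  ultimately show "a = b"
    using ab by simp
qed

lemma card_circulant_colour_class_le:
  assumes "0 < L"
  shows "card {e \<in> circulant_edges m d. arc_colouring n m d L e = x} \<le> L * d"
proof -
  let ?arc = "{x * L..<x * L + L}"
  let ?edge = "\<lambda>(u, j). {u, (u + j) mod m}"
  have "{e \<in> circulant_edges m d. arc_colouring n m d L e = x} \<subseteq> ?edge ` (?arc \<times> {1..d})"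
  proof
    fix e
    assume "e \<in> {e \<in> circulant_edges m d. arc_colouring n m d L e = x}"
    then have e: "e \<in> circulant_edges m d" "arc_colouring n m d L e = x"
      by simp_all
    define u where "u = circulant_start m d e"
    obtain j where j: "1 \<le> j" "j \<le> d" "e = {u, (u + j) mod m}"
      using e(1) unfolding u_def by (rule circulant_edge_startE)
    have "u div L = x"
      using e circulant_edge_subset[OF e(1)] unfolding arc_colouring_def u_def by simp
    moreover have "u div L * L \<le> u"
      by (rule div_times_less_eq_dividend)
    moreover have "u < L + u div L * L"
      using assms by (rule dividend_less_div_times)
    ultimately have "(u, j) \<in> ?arc \<times> {1..d}"
      using j(1,2) by simp
    then show "e \<in> ?edge ` (?arc \<times> {1..d})"
      by (rule rev_image_eqI) (simp add: j(3))
  qed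
  then have "card {e \<in> circulant_edges m d. arc_colouring n m d L e = x} \<le> card (?edge ` (?arc \<times> {1..d}))"
    by (rule card_mono[rotated]) simp
  also have "\<dots> \<le> card (?arc \<times> {1..d})"
    by (rule card_image_le) simp
  also have "\<dots> = L * d"
    by (simp add: card_cartesian_product)
  finally show ?thesis .
qed

lemma card_cross_colour_class_le: "card {e \<in> cross_edges n m. arc_colouring n m d L e = x} \<le> 1"
proof -
  let ?Q = "{e \<in> cross_edges n m. arc_colouring n m d L e = x}"
  have "card ?Q = card (arc_colouring n m d L ` ?Q)"
    by (rule card_image[symmetric], rule inj_on_subset[OF inj_on_arc_colouring_cross]) auto
  also have "\<dots> \<le> card {x}"
    by (rule card_mono) auto
  finally show ?thesis
    by simp
qed

lemma bounded_arc_colouring: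
  assumes "0 < L" "real (L * d) \<le> k" "1 \<le> k"
  shows "bounded_colouring k (circulant_edges m d \<union> cross_edges n m) (arc_colouring n m d L)"
  unfolding bounded_colouring_def
proof
  fix x
  let ?class = "\<lambda>F. {e \<in> F. arc_colouring n m d L e = x}"
  show "real (card (?class (circulant_edges m d \<union> cross_edges n m))) \<le> k"
  proof (cases "x < m")
    case True
    then have "?class (circulant_edges m d \<union> cross_edges n m) = ?class (circulant_edges m d)"
      using arc_colouring_cross_ge[of _ n m d L] by fastforce
    then have "card (?class (circulant_edges m d \<union> cross_edges n m)) \<le> L * d"
      using card_circulant_colour_class_le[OF assms(1), of m d n x] by simp
    then show ?thesis
      using assms(2) by linarith
  next
    case False
    have "m \<le> L * m"
      using assms(1) by simp
    with False have "?class (circulant_edges m d \<union> cross_edges n m) = ?class (cross_edges n m)"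
      using arc_colouring_circulant_lt[of _ m d L m n] by fastforce
    then have "card (?class (circulant_edges m d \<union> cross_edges n m)) \<le> 1"
      using card_cross_colour_class_le[of n m d L x] by simp
    then show ?thesis
      using assms(3) by linarith
  qed
qed

section \<open>Hamilton cycles\<close>

lemma card_in_le_card_consecutive_in:
  fixes vs :: "'a list"
  defines "n \<equiv> length vs"
  shows "card {i. i < n \<and> vs ! i \<in> A} \<le>
    card {i. i < n \<and> vs ! i \<in> A \<and> vs ! ((i + 1) mod n) \<in> A} + card {i. i < n \<and> vs ! i \<notin> A}"
proof -
  let ?stay = "{i. i < n \<and> vs ! i \<in> A \<and> vs ! ((i + 1) mod n) \<in> A}"
  let ?leave = "{i. i < n \<and> vs ! i \<in> A \<and> vs ! ((i + 1) mod n) \<notin> A}"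
  let ?out = "{i. i < n \<and> vs ! i \<notin> A}"
  have "card ?leave \<le> card ?out"
  proof (rule card_inj_on_le)
    show "inj_on (\<lambda>i. (1 + i) mod n) ?leave"
      by (rule inj_on_subset[OF inj_on_add_mod]) auto
    show "(\<lambda>i. (1 + i) mod n) ` ?leave \<subseteq> ?out"
      by (auto simp: add.commute)
  qed simp
  moreover have "{i. i < n \<and> vs ! i \<in> A} = ?stay \<union> ?leave"
    by auto
  ultimately show ?thesis
    using card_Un_le[of ?stay ?leave] by simp
qed

lemma inj_on_cycle_edge:
  assumes "distinct vs" "3 \<le> length vs"
  shows "inj_on (\<lambda>i. {vs ! i, vs ! ((i + 1) mod length vs)}) {..<length vs}"
proof (rule inj_onI)
  let ?n = "length vs"
  fix i j
  assume i: "i \<in> {..<?n}" and j: "j \<in> {..<?n}"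
    and same: "{vs ! i, vs ! ((i + 1) mod ?n)} = {vs ! j, vs ! ((j + 1) mod ?n)}"
  have "0 < ?n"
    using assms(2) by linarith
  then have succ: "(i + 1) mod ?n < ?n" "(j + 1) mod ?n < ?n"
    by simp_all
  have nth_inj: "a = b" if "a < ?n" "b < ?n" "vs ! a = vs ! b" for a b
    using that assms(1) nth_eq_iff_index_eq by blast
  show "i = j"
  proof (rule ccontr)
    assume "i \<noteq> j"
    then have "vs ! i = vs ! ((j + 1) mod ?n)" "vs ! ((i + 1) mod ?n) = vs ! j"
      using same nth_inj i j by (auto simp: doubleton_eq_iff)
    then have "i = (j + 1) mod ?n" "(i + 1) mod ?n = j"
      using nth_inj i j succ by auto
    then have "i = ((i + 1) mod ?n + 1) mod ?n"
      by simp
    also have "\<dots> = (i + 1 + 1) mod ?n"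
      by (rule mod_add_left_eq)
    finally have "(i + 1 + 1) mod ?n = i"
      by simp
    moreover have "(i + 2) mod ?n \<noteq> i"
      using add_mod_neq_self[of i ?n 2] i assms(2) by simp
    ultimately show False
      by simp
  qed
qed

lemma no_rainbow_ham_cycle_if_few_inner_colours:
  assumes "A \<subseteq> {0..<n}" "finite K" "n + card K < 2 * card A"
    and inner: "\<And>e. e \<in> E \<Longrightarrow> e \<subseteq> A \<Longrightarrow> c e \<in> K"
  shows "\<not> has_rainbow_ham_cycle n E c"
proof
  assume "has_rainbow_ham_cycle n E c"
  then obtain vs where "ham_cycle n E vs" and rainbow: "inj_on c (cycle_edges vs)"
    unfolding has_rainbow_ham_cycle_def rainbow_def by blast
  then have n: "3 \<le> n" "length vs = n" and "distinct vs" "set vs = {0..<n}"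
    and edge: "\<And>i. i < n \<Longrightarrow> {vs ! i, vs ! ((i + 1) mod n)} \<in> E"
    unfolding ham_cycle_def by auto
  let ?edge = "\<lambda>i. {vs ! i, vs ! ((i + 1) mod n)}"
  define I where "I = {i. i < n \<and> vs ! i \<in> A \<and> vs ! ((i + 1) mod n) \<in> A}"
  have positions: "card {i. i < n \<and> P (vs ! i)} = card {x \<in> {0..<n}. P x}" for P
    using length_filter_conv_card[of P vs] distinct_card[OF distinct_filter[OF \<open>distinct vs\<close>]]
      \<open>set vs = {0..<n}\<close> n(2) by simp
  have "{x \<in> {0..<n}. x \<in> A} = A" "{x \<in> {0..<n}. x \<notin> A} = {0..<n} - A"
    using assms(1) by auto
  then have "card {i. i < n \<and> vs ! i \<in> A} = card A"
    and "card {i. i < n \<and> vs ! i \<notin> A} = n - card A"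
    using positions[of "\<lambda>x. x \<in> A"] positions[of "\<lambda>x. x \<notin> A"] assms(1)
    by (simp_all add: card_Diff_subset finite_subset)
  then have "card A \<le> card I + (n - card A)"
    using card_in_le_card_consecutive_in[of vs A] n(2) unfolding I_def by simp
  have in_cycle: "?edge ` I \<subseteq> cycle_edges vs"
    unfolding cycle_edges_def I_def using n(2) by blast
  have inner_colours: "c ` ?edge ` I \<subseteq> K"
    using inner edge unfolding I_def by blast
  have "I \<subseteq> {..<n}"
    unfolding I_def by blast
  then have "inj_on ?edge I"
    using inj_on_cycle_edge[OF \<open>distinct vs\<close>] n by (simp add: inj_on_subset)
  then have "card I = card (?edge ` I)"
    by (simp add: card_image)
  also have "\<dots> = card (c ` ?edge ` I)"
    using inj_on_subset[OF rainbow in_cycle] by (simp add: card_image)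
  also have "\<dots> \<le> card K"
    using inner_colours assms(2) by (rule card_mono[rotated])
  finally have "card I \<le> card K" .
  moreover have "card A \<le> n"
    using card_mono[OF _ assms(1)] by simp
  ultimately show False
    using \<open>card A \<le> card I + (n - card A)\<close> assms(3) by linarith
qed

lemma no_rainbow_ham_cycle_arc_colouring:
  assumes "m \<le> n" "m \<le> L * C" "n + C < 2 * m"
  shows "\<not> has_rainbow_ham_cycle n (circulant_edges m d \<union> cross_edges n m) (arc_colouring n m d L)"
proof (rule no_rainbow_ham_cycle_if_few_inner_colours[where A = "{..<m}" and K = "{..<C}"])
  fix e
  assume "e \<in> circulant_edges m d \<union> cross_edges n m" "e \<subseteq> {..<m}"
  then have "e \<in> circulant_edges m d"
    using cross_edge_not_subset by blast
  then show "arc_colouring n m d L e \<in> {..<C}"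
    using assms(2) by (simp add: arc_colouring_circulant_lt)
qed (use assms in auto)

section \<open>Choice of parameters\<close>

lemma circulant_width_exists:
  fixes \<mu> :: real
  assumes "1/8 < \<mu>"
  obtains d :: nat where "1 \<le> d" "real d / (8 * real d - 4) < \<mu>"
proof
  define d :: nat where "d = nat \<lceil>1 / (\<mu> - 1/8)\<rceil> + 1"
  show "1 \<le> d"
    unfolding d_def by simp
  have "1 / (\<mu> - 1/8) < real d"
    unfolding d_def by linarith
  then have "1 < real d * (\<mu> - 1/8)"
    using assms by (simp add: field_simps)
  moreover have "real d * (\<mu> - 1/8) \<le> (16 * real d - 8) * (\<mu> - 1/8)"
    using assms \<open>1 \<le> d\<close> by (intro mult_right_mono) simp_all
  ultimately have "1 / (16 * real d - 8) < \<mu> - 1/8"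
    using \<open>1 \<le> d\<close> by (simp add: field_simps)
  moreover have "real d / (8 * real d - 4) = 1/8 + 1 / (16 * real d - 8)"
    using \<open>1 \<le> d\<close> by (simp add: field_simps)
  ultimately show "real d / (8 * real d - 4) < \<mu>"
    by simp
qed

lemma arc_class_size_le:
  fixes n d :: nat and \<mu> :: real
  assumes "1 \<le> d" "real d ^ 2 + real d \<le> (\<mu> - real d / (8 * real d - 4)) * real n"
  shows "real (((n div 2 + 2 * d) div (4 * d - 2) + 1) * d) \<le> \<mu> * real n"
proof -
  let ?m = "n div 2 + 2 * d" and ?D = "real d"
  have C: "real (4 * d - 2) = 4 * ?D - 2" "0 < 4 * ?D - 2"
    using assms(1) by simp_all
  have "real (?m div (4 * d - 2)) \<le> real ?m / (4 * ?D - 2)"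
    using of_nat_div_le_of_nat[of ?m "4 * d - 2", where ?'a = real] C(1) by simp
  also have "\<dots> \<le> (real n / 2 + 2 * ?D) / (4 * ?D - 2)"
    using C(2) of_nat_div_le_of_nat[of n 2, where ?'a = real] by (intro divide_right_mono) simp_all
  also have "\<dots> = real n / (8 * ?D - 4) + 2 * ?D / (4 * ?D - 2)"
    by (simp add: add_divide_distrib mult.commute[of 2] left_diff_distrib)
  also have "2 * ?D / (4 * ?D - 2) \<le> ?D"
    using C(2) assms(1) by (simp add: field_simps)
  finally have "real (?m div (4 * d - 2)) + 1 \<le> real n / (8 * ?D - 4) + ?D + 1"
    by simp
  then have "real ((?m div (4 * d - 2) + 1) * d) \<le> (real n / (8 * ?D - 4) + ?D + 1) * ?D"
    unfolding of_nat_mult of_nat_add of_nat_1 by (rule mult_right_mono) simp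
  also have "\<dots> = ?D / (8 * ?D - 4) * real n + (?D ^ 2 + ?D)"
    by (simp add: field_simps power2_eq_square)
  also have "\<dots> \<le> \<mu> * real n"
    using assms(2) by (simp add: algebra_simps)
  finally show ?thesis .
qed

lemma exists_colouring_without_rainbow_ham_cycle:
  fixes n d :: nat and k :: real
  assumes "1 \<le> d" "4 * d \<le> n" "real (((n div 2 + 2 * d) div (4 * d - 2) + 1) * d) \<le> k" "1 \<le> k"
  shows "\<exists>E (c :: nat set \<Rightarrow> nat).
    dirac_graph n E \<and> bounded_colouring k E c \<and> \<not> has_rainbow_ham_cycle n E c"
proof -
  define m where "m = n div 2 + 2 * d"
  define C where "C = 4 * d - 2"
  define L where "L = m div C + 1"
  have "0 < C"
    using assms(1) unfolding C_def by simp
  then have "m \<le> L * C"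
    using dividend_less_div_times[of C m] unfolding L_def by (simp add: algebra_simps)
  have m: "2 * d < m" "m \<le> n" "n \<le> 2 * (n - m + 2 * d)" "n \<le> 2 * m" "n + C < 2 * m"
    using assms(1,2) unfolding m_def C_def by auto
  show ?thesis
    using dirac_graph_circulant_cross[OF m(1-4)]
      bounded_arc_colouring[of L d k m n] assms(3,4)
      no_rainbow_ham_cycle_arc_colouring[OF m(2) \<open>m \<le> L * C\<close> m(5)]
    unfolding m_def C_def L_def by auto
qed

theorem mainTheorem2:
  fixes \<mu> :: real
  assumes "\<mu> > 1/8"
  shows "\<exists>n0::nat. \<forall>n\<ge>n0. \<exists>(E::nat set set) (c::nat set \<Rightarrow> nat).
           dirac_graph n E \<and> bounded_colouring (\<mu> * real n) E c \<and>
           \<not> has_rainbow_ham_cycle n E c"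
proof -
  obtain d :: nat where d: "1 \<le> d" "real d / (8 * real d - 4) < \<mu>"
    using assms by (rule circulant_width_exists)
  define \<eta> where "\<eta> = \<mu> - real d / (8 * real d - 4)"
  have "filterlim (\<lambda>n. \<eta> * real n) at_top sequentially"
    using d(2) unfolding \<eta>_def
    by (intro filterlim_tendsto_pos_mult_at_top[OF tendsto_const _ filterlim_real_sequentially]) simp
  then have "\<forall>\<^sub>F n in sequentially. real d ^ 2 + real d \<le> \<eta> * real n"
    by (simp add: filterlim_at_top)
  moreover have "\<forall>\<^sub>F n in sequentially. 4 * d + 8 \<le> n"
    by (rule eventually_ge_at_top)
  ultimately have "\<forall>\<^sub>F n in sequentially. \<exists>(E::nat set set) (c::nat set \<Rightarrow> nat).
      dirac_graph n E \<and> bounded_colouring (\<mu> * real n) E c \<and> \<not> has_rainbow_ham_cycle n E c"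
  proof eventually_elim
    case (elim n)
    have "(1/8) * 8 \<le> \<mu> * real n"
      using assms elim(2) by (intro mult_mono) auto
    then have "1 \<le> \<mu> * real n"
      by simp
    then show ?case
      using exists_colouring_without_rainbow_ham_cycle[OF d(1) _ arc_class_size_le[OF d(1)]] elim unfolding \<eta>_def by auto
  qed
  then show ?thesis
    by (simp add: eventually_sequentially)
qed

end
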